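(* Let $\xi$ be a positive real number, let $\varepsilon$ be a real number with $0<\varepsilon<1$, and let $(a_n)_{n\ge1}$ be a sequence of real numbers with $0\le a_n<1-\varepsilon$ for all $n\ge1$. Then the set of real numbers $\alpha$ such that $$a_n \le \{\xi \alpha^n\} \le a_n + \varepsilon \quad \text{for every } n\ge 1$$ has Hausdorff dimension $1$.
   Context: For a real number $x$, $\{x\}$ denotes its fractional part $x-\lfloor x\rfloor$. *)

theory Defs
  imports "HOL-Analysis.Analysis"
begin

definition hausdorff_pre :: "real \<Rightarrow> real \<Rightarrow> 'a::metric_space set \<Rightarrow> ennreal" where
  "hausdorff_pre s \<delta> E =
     (INF U \<in> {U :: nat \<Rightarrow> 'a set. E \<subseteq> (\<Union>i. U i) \<and>
                  (\<forall>i. bounded (U i) \<and> diameter (U i) \<le> \<delta>)}.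
        (\<Sum>i. ennreal (diameter (U i) powr s)))"

definition hausdorff_measure :: "real \<Rightarrow> 'a::metric_space set \<Rightarrow> ennreal" where
  "hausdorff_measure s E = (SUP \<delta> \<in> {0<..}. hausdorff_pre s \<delta> E)"

definition hausdorff_dim :: "'a::metric_space set \<Rightarrow> real" where
  "hausdorff_dim E = Inf {s. 0 \<le> s \<and> hausdorff_measure s E = 0}"

end

theory Submission
  imports Defs
begin

text \<open>Every set of reals has \<open>s\<close>-dimensional Hausdorff measure zero for \<open>s > 1\<close>, so only
  the lower bound needs work. Fix \<open>s < 1\<close>, a large \<open>M\<close> and \<open>N \<approx> M min(\<xi>, \<epsilon>)\<close> with
  \<open>N \<ge> (4M)\<^sup>s\<close>. Let \<open>I\<^sub>n(k)\<close> be the interval of those \<open>\<alpha> \<in> [M, 2M]\<close> with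
  \<open>k + a\<^sub>n \<le> \<xi> \<alpha>\<^sup>n \<le> k + a\<^sub>n + \<epsilon>\<close>; on it the fractional part of \<open>\<xi> \<alpha>\<^sup>n\<close> lies in the
  prescribed window. As \<open>\<alpha>\<close> runs through \<open>I\<^sub>n(k)\<close>, \<open>\<xi> \<alpha>\<^sup>n\<^sup>+\<^sup>1\<close> sweeps an interval of
  length at least \<open>M \<epsilon> \<ge> N + 1\<close>, so \<open>I\<^sub>n(k)\<close> contains \<open>N\<close> intervals \<open>I\<^sub>n\<^sub>+\<^sub>1(k')\<close>
  with consecutive \<open>k'\<close>. This yields a Cantor set inside our set with \<open>N\<^sup>n\<close> intervals at
  level \<open>n\<close>, any two of them at distance at least \<open>(1 - \<epsilon>) / (\<xi> (4M)\<^sup>n)\<close> by the mean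
  value theorem. A counting form of the mass distribution principle then bounds
  \<open>\<Sum> diam(U\<^sub>i)\<^sup>s\<close> from below for every cover \<open>(U\<^sub>i)\<close> of the Cantor set.\<close>

lemma power_Suc_diff_le:
  fixes x y :: real
  assumes "0 \<le> x" "x \<le> y"
  shows "y ^ Suc n - x ^ Suc n \<le> Suc n * y ^ n * (y - x)"
proof (induction n)
  case (Suc n)
  have "y ^ Suc (Suc n) - x ^ Suc (Suc n) = y * (y ^ Suc n - x ^ Suc n) + x ^ Suc n * (y - x)"
    by (simp add: algebra_simps)
  also have "\<dots> \<le> y * (Suc n * y ^ n * (y - x)) + y ^ Suc n * (y - x)"
    using Suc assms by (intro add_mono mult_left_mono mult_right_mono power_mono) auto
  also have "\<dots> = Suc (Suc n) * y ^ Suc n * (y - x)"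
    by (simp add: algebra_simps)
  finally show ?case .
qed simp

lemma power_Suc_diff_ge:
  fixes x y :: real
  assumes "0 \<le> x" "x \<le> y"
  shows "Suc n * x ^ n * (y - x) \<le> y ^ Suc n - x ^ Suc n"
proof (induction n)
  case (Suc n)
  have "Suc (Suc n) * x ^ Suc n * (y - x) = x * (Suc n * x ^ n * (y - x)) + x ^ Suc n * (y - x)"
    by (simp add: algebra_simps)
  also have "\<dots> \<le> x * (y ^ Suc n - x ^ Suc n) + y ^ Suc n * (y - x)"
    using Suc assms by (intro add_mono mult_left_mono mult_right_mono power_mono) auto
  also have "\<dots> = y ^ Suc (Suc n) - x ^ Suc (Suc n)"
    by (simp add: algebra_simps)
  finally show ?case .
qed simp

lemma Suc_mult_power_le:
  fixes M :: real
  assumes "1 \<le> M"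
  shows "real (Suc m) * (2 * M) ^ m \<le> (4 * M) ^ Suc m"
proof -
  have "real (Suc m) \<le> 2 ^ Suc m"
    using less_exp[of "Suc m"] by (metis of_nat_le_iff of_nat_numeral of_nat_power less_imp_le)
  then have "real (Suc m) * (2 * M) ^ m \<le> 2 ^ Suc m * (2 * M) ^ m"
    using assms by (intro mult_right_mono) auto
  also have "\<dots> = 2 * (2 ^ m * (2 * M) ^ m)"
    by simp
  also have "\<dots> = 2 * (4 * M) ^ m"
    using power_mult_distrib[of "2::real" 2 m] by (simp add: power_mult_distrib)
  also have "\<dots> \<le> 4 * M * (4 * M) ^ m"
    using assms by (intro mult_right_mono zero_le_power) auto
  finally show ?thesis
    by simp
qed

lemma powr_add_le_add_powr:
  fixes x y s :: real
  assumes "0 \<le> x" "0 \<le> y" "0 < s" "s \<le> 1"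
  shows "(x + y) powr s \<le> x powr s + y powr s"
proof (cases "x + y = 0")
  case False
  define t where "t = x + y"
  have t: "t > 0"
    using False assms unfolding t_def by simp
  have le_powr: "u \<le> u powr s" if "0 \<le> u" "u \<le> 1" for u :: real
  proof (cases "u = 0")
    case False
    then show ?thesis
      using powr_mono'[of s 1 u] assms that by simp
  qed simp
  have "1 = x / t + y / t"
    using t by (simp add: t_def add_divide_distrib[symmetric])
  also have "\<dots> \<le> (x / t) powr s + (y / t) powr s"
    using assms t by (intro add_mono le_powr) (auto simp: t_def field_simps)
  also have "\<dots> = (x powr s + y powr s) / t powr s"
    by (simp add: powr_divide add_divide_distrib)
  finally show ?thesis
    using t by (simp add: t_def le_divide_eq)
qed simp

lemma card_separated_le:
  fixes P :: "real set"
  assumes "finite P" "G > 0" "P \<subseteq> {x..y}" "x \<le> y + G"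
    and "\<And>p q. p \<in> P \<Longrightarrow> q \<in> P \<Longrightarrow> p \<noteq> q \<Longrightarrow> G \<le> \<bar>p - q\<bar>"
  shows "real (card P) * G \<le> y - x + G"
  using assms
proof (induction "card P" arbitrary: P y)
  case (Suc c)
  have "P \<noteq> {}"
    using Suc.hyps(2) by auto
  define m where "m = Max P"
  have m: "m \<in> P" "\<And>p. p \<in> P \<Longrightarrow> p \<le> m"
    using \<open>P \<noteq> {}\<close> Suc.prems(1) unfolding m_def by auto
  have "P - {m} \<subseteq> {x..m - G}"
    using Suc.prems m by force
  moreover have "card (P - {m}) = c"
    using Suc.hyps(2) m(1) by simp
  ultimately have "real (card (P - {m})) * G \<le> (m - G) - x + G"
    using Suc.prems m(1) by (intro Suc.hyps(1)) auto
  moreover have "card P = Suc (card (P - {m}))"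
    using Suc.prems(1) m(1) card_Suc_Diff1 by metis
  moreover have "m \<le> y"
    using Suc.prems(3) m(1) by auto
  ultimately show ?case
    by (simp add: algebra_simps)
qed simp

lemma compact_decreasing_subset_open:
  fixes K :: "nat \<Rightarrow> 'a::heine_borel set"
  assumes "\<And>n. compact (K n)" "\<And>m n. m \<le> n \<Longrightarrow> K n \<subseteq> K m"
    and "open W" "(\<Inter>n. K n) \<subseteq> W"
  obtains n where "K n \<subseteq> W"
proof -
  have "\<Inter> (range (\<lambda>n. K n - W)) = {}"
    using assms(4) by blast
  moreover have "compact (K n - W)" "K n - W \<subseteq> K m - W" if "m \<le> n" for m n
    using assms(1-3) that by (auto simp: compact_diff)
  ultimately obtain n where "K n - W = {}"
    using compact_nest[of "\<lambda>n. K n - W"] by auto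
  then show ?thesis
    using that by blast
qed

lemma bounded_subset_ball_diameter:
  fixes U :: "'a::metric_space set"
  assumes "bounded U" "z \<in> U" "0 < e"
  shows "U \<subseteq> ball z (diameter U + e)"
  using diameter_bounded_bound[OF assms(1,2)] assms(3) by fastforce

lemma sum_powr_enlarged_le:
  fixes d :: "nat \<Rightarrow> real"
  assumes "finite F" "0 < s" "s \<le> 1" "0 < \<eta>" "\<And>i. 0 \<le> d i"
  shows "(\<Sum>i\<in>F. (2 * (d i + (\<eta> / 2 ^ Suc i) powr (1 / s))) powr s)
           \<le> 2 * (\<Sum>i\<in>F. d i powr s) + 2 * \<eta>"
proof -
  have "(\<Sum>i\<in>F. (1 / 2 :: real) ^ Suc i) \<le> (\<Sum>i. (1 / 2) ^ Suc i)"
    using power_half_series assms(1) by (intro sum_le_suminf) (auto simp: sums_iff)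
  then have half_sum: "(\<Sum>i\<in>F. (1 / 2 :: real) ^ Suc i) \<le> 1"
    using power_half_series by (simp add: sums_iff)
  have "(\<Sum>i\<in>F. (2 * (d i + (\<eta> / 2 ^ Suc i) powr (1 / s))) powr s)
          \<le> (\<Sum>i\<in>F. 2 * (d i powr s + \<eta> * (1 / 2) ^ Suc i))"
  proof (rule sum_mono)
    fix i
    define e where "e = (\<eta> / 2 ^ Suc i) powr (1 / s)"
    have e: "0 \<le> e" "e powr s = \<eta> * (1 / 2) ^ Suc i"
      using assms(2,4) by (simp_all add: e_def powr_powr power_divide)
    have "(2 * (d i + e)) powr s \<le> (d i + e) powr s + (d i + e) powr s"
      using powr_add_le_add_powr[of "d i + e" "d i + e" s] assms(2,3,5) e(1) by simp
    also have "\<dots> \<le> 2 * (d i powr s + e powr s)"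
      using powr_add_le_add_powr[of "d i" e s] assms(2,3,5) e(1) by simp
    finally show "(2 * (d i + e)) powr s \<le> 2 * (d i powr s + \<eta> * (1 / 2) ^ Suc i)"
      using e(2) by simp
  qed
  also have "\<dots> = 2 * (\<Sum>i\<in>F. d i powr s) + 2 * (\<eta> * (\<Sum>i\<in>F. (1 / 2) ^ Suc i))"
    by (simp add: sum.distrib sum_distrib_left)
  also have "\<dots> \<le> 2 * (\<Sum>i\<in>F. d i powr s) + 2 * \<eta>"
    using half_sum assms(4) by (simp add: mult_left_le)
  finally show ?thesis .
qed

section \<open>Hausdorff measure and dimension\<close>

lemma hausdorff_measure_ge_of_cover_bound:
  fixes E :: "'a::metric_space set"
  assumes cover: "\<And>U :: nat \<Rightarrow> 'a set. E \<subseteq> (\<Union>i. U i) \<Longrightarrow> (\<And>i. bounded (U i)) \<Longrightarrow>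
                   (\<And>i. diameter (U i) \<le> 1) \<Longrightarrow> c \<le> (\<Sum>i. ennreal (diameter (U i) powr s))"
    and "t \<le> s"
  shows "c \<le> hausdorff_measure t E"
proof -
  have "c \<le> hausdorff_pre t 1 E"
    unfolding hausdorff_pre_def
  proof (rule INF_greatest)
    fix U :: "nat \<Rightarrow> 'a set"
    assume U: "U \<in> {U. E \<subseteq> (\<Union>i. U i) \<and> (\<forall>i. bounded (U i) \<and> diameter (U i) \<le> 1)}"
    then have "c \<le> (\<Sum>i. ennreal (diameter (U i) powr s))"
      by (intro cover) auto
    also have "\<dots> \<le> (\<Sum>i. ennreal (diameter (U i) powr t))"
      using U assms(2) by (intro suminf_le ennreal_leI powr_mono' diameter_ge_0) auto
    finally show "c \<le> (\<Sum>i. ennreal (diameter (U i) powr t))" .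
  qed
  also have "\<dots> \<le> hausdorff_measure t E"
    unfolding hausdorff_measure_def by (rule SUP_upper) simp
  finally show ?thesis .
qed

lemma hausdorff_dim_eqI:
  assumes "0 \<le> d"
    and "\<And>s. d < s \<Longrightarrow> hausdorff_measure s E = 0"
    and "\<And>t. 0 \<le> t \<Longrightarrow> t < d \<Longrightarrow> hausdorff_measure t E \<noteq> 0"
  shows "hausdorff_dim E = d"
  unfolding hausdorff_dim_def
proof (rule cInf_eq_non_empty)
  have "d + 1 \<in> {s. 0 \<le> s \<and> hausdorff_measure s E = 0}"
    using assms(1) assms(2)[of "d + 1"] by simp
  then show "{s. 0 \<le> s \<and> hausdorff_measure s E = 0} \<noteq> {}"
    by blast
  show "d \<le> s" if "s \<in> {s. 0 \<le> s \<and> hausdorff_measure s E = 0}" for s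
  proof (rule ccontr)
    assume "\<not> d \<le> s"
    then show False
      using that assms(3)[of s] by simp
  qed
  show "y \<le> d" if "\<And>s. s \<in> {s. 0 \<le> s \<and> hausdorff_measure s E = 0} \<Longrightarrow> y \<le> s" for y
  proof (rule dense_ge)
    fix z
    assume "d < z"
    then show "y \<le> z"
      using assms(1) assms(2)[of z] by (intro that) simp
  qed
qed

text \<open>The intervals \<open>log_interval c i\<close> have length about \<open>c / (i + 1)\<close>, which is
  \<open>s\<close>-summable for \<open>s > 1\<close>, yet they cover \<open>\<real>\<close> since \<open>ln\<close> is unbounded.\<close>

definition log_interval :: "real \<Rightarrow> nat \<Rightarrow> real set" where
  "log_interval c i =
     (if even i then {c * ln (real (i div 2) + 1) .. c * ln (real (i div 2) + 2)}
      else {- c * ln (real (i div 2) + 2) .. - c * ln (real (i div 2) + 1)})"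

lemma nonneg_between_logs:
  fixes c x :: real
  assumes "c > 0" "x \<ge> 0"
  obtains j :: nat where "c * ln (real j + 1) \<le> x" "x \<le> c * ln (real j + 2)"
proof
  define n where "n = \<lfloor>exp (x / c)\<rfloor>"
  have "1 \<le> n"
    using assms by (simp add: n_def)
  define j where "j = nat (n - 1)"
  have n: "of_int n = real j + 1"
    using \<open>1 \<le> n\<close> by (simp add: j_def)
  have "real j + 1 \<le> exp (x / c)"
    using of_int_floor_le[of "exp (x / c)"] n unfolding n_def by linarith
  then have "ln (real j + 1) \<le> x / c"
    using ln_le_cancel_iff[of "real j + 1" "exp (x / c)"] by simp
  then show "c * ln (real j + 1) \<le> x"
    using assms by (simp add: field_simps)
  have "exp (x / c) < real j + 2"
    using real_of_int_floor_gt_diff_one[of "exp (x / c)"] n unfolding n_def by linarith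
  then have "x / c < ln (real j + 2)"
    using ln_less_cancel_iff[of "exp (x / c)" "real j + 2"] by simp
  then show "x \<le> c * ln (real j + 2)"
    using assms by (simp add: field_simps)
qed

lemma log_intervals_cover:
  assumes "c > 0"
  shows "(\<Union>i. log_interval c i) = UNIV"
proof -
  have "x \<in> (\<Union>i. log_interval c i)" for x
  proof -
    obtain j where j: "c * ln (real j + 1) \<le> \<bar>x\<bar>" "\<bar>x\<bar> \<le> c * ln (real j + 2)"
      using nonneg_between_logs[OF assms abs_ge_zero] .
    have "x \<in> log_interval c (2 * j) \<union> log_interval c (2 * j + 1)"
      using j by (cases "x \<ge> 0") (auto simp: log_interval_def)
    then show ?thesis
      by blast
  qed
  then show ?thesis
    by blast
qed

lemma diameter_log_interval:
  assumes "c > 0"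
  shows "diameter (log_interval c i) \<le> 2 * c / real (Suc i)"
proof -
  define j where "j = real (i div 2)"
  have "ln (j + 2) - ln (j + 1) = ln ((j + 2) / (j + 1))"
    using ln_div[of "j + 2" "j + 1"] by (simp add: j_def)
  also have "\<dots> = ln (1 + 1 / (j + 1))"
    by (simp add: j_def field_simps)
  also have "\<dots> \<le> 1 / (j + 1)"
    by (simp add: ln_add_one_self_le_self j_def)
  also have "\<dots> \<le> 2 / real (Suc i)"
    unfolding j_def by (simp add: field_simps)
  finally have "c * (ln (j + 2) - ln (j + 1)) \<le> c * (2 / real (Suc i))"
    using assms by (intro mult_left_mono) auto
  then have "c * ln (j + 2) - c * ln (j + 1) \<le> 2 * c / real (Suc i)"
    by (simp add: right_diff_distrib mult.commute)
  moreover have "c * ln (j + 1) \<le> c * ln (j + 2)"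
    using assms by (simp add: j_def)
  ultimately show ?thesis
    by (simp add: log_interval_def j_def[symmetric])
qed

lemma summable_Suc_powr:
  assumes "1 < s"
  shows "summable (\<lambda>i. real (Suc i) powr - s)"
proof -
  have "summable (\<lambda>i. real i powr - s)"
    using assms by (simp add: summable_real_powr_iff)
  then show ?thesis
    using summable_Suc_iff[of "\<lambda>i. real i powr - s"] by simp
qed

lemma hausdorff_pre_real_le:
  fixes E :: "real set"
  assumes "1 < s" "0 < d" "d \<le> \<delta>"
  shows "hausdorff_pre s \<delta> E \<le> ennreal (d powr s * (\<Sum>i. real (Suc i) powr - s))"
proof -
  define U where "U = log_interval (d / 2)"
  have diam: "diameter (U i) \<le> d / real (Suc i)" for i
    using diameter_log_interval[of "d / 2" i] assms(2) by (simp add: U_def)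
  have bounded: "bounded (U i)" for i
    by (simp add: U_def log_interval_def)
  have d_le: "d / real (Suc i) \<le> d" for i
    using assms(2) by (simp add: field_simps)
  have "diameter (U i) \<le> \<delta>" for i
    using diam[of i] assms(3) d_le[of i] by linarith
  moreover have "E \<subseteq> (\<Union>i. U i)"
    using log_intervals_cover[of "d / 2"] assms(2) by (simp add: U_def)
  ultimately have "U \<in> {U. E \<subseteq> (\<Union>i. U i) \<and> (\<forall>i. bounded (U i) \<and> diameter (U i) \<le> \<delta>)}"
    using bounded by blast
  then have "hausdorff_pre s \<delta> E \<le> (\<Sum>i. ennreal (diameter (U i) powr s))"
    unfolding hausdorff_pre_def by (rule INF_lower)
  also have "\<dots> \<le> (\<Sum>i. ennreal (d powr s * real (Suc i) powr - s))"
  proof (intro suminf_le ennreal_leI)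
    fix i
    have "diameter (U i) powr s \<le> (d / real (Suc i)) powr s"
      using diam assms bounded by (intro powr_mono2 diameter_ge_0) auto
    then show "diameter (U i) powr s \<le> d powr s * real (Suc i) powr - s"
      using assms(2) by (simp add: powr_divide powr_minus_divide)
  qed auto
  also have "\<dots> = ennreal (d powr s * (\<Sum>i. real (Suc i) powr - s))"
    using summable_Suc_powr[OF assms(1)] by (simp add: suminf_ennreal2 summable_mult suminf_mult)
  finally show ?thesis .
qed

lemma hausdorff_measure_real_eq_0:
  fixes E :: "real set"
  assumes "1 < s"
  shows "hausdorff_measure s E = 0"
proof -
  define Z where "Z = (\<Sum>i. real (Suc i) powr - s)"
  have "Z \<ge> 0"
    unfolding Z_def using summable_Suc_powr[OF assms] by (rule suminf_nonneg) simp
  have pre_le: "hausdorff_pre s \<delta> E \<le> ennreal \<eta>" if "\<delta> > 0" "\<eta> > 0" for \<delta> \<eta>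
  proof -
    define d where "d = min \<delta> ((\<eta> / (Z + 1)) powr (1 / s))"
    have d: "0 < d" "d \<le> \<delta>"
      using that \<open>Z \<ge> 0\<close> by (auto simp: d_def)
    have "d powr s \<le> ((\<eta> / (Z + 1)) powr (1 / s)) powr s"
      using d assms by (intro powr_mono2) (auto simp: d_def)
    also have "\<dots> = \<eta> / (Z + 1)"
      using assms that \<open>Z \<ge> 0\<close> by (simp add: powr_powr)
    finally have "d powr s * Z \<le> \<eta> / (Z + 1) * Z"
      using \<open>Z \<ge> 0\<close> by (rule mult_right_mono)
    also have "\<dots> \<le> \<eta>"
      using \<open>Z \<ge> 0\<close> that by (simp add: field_simps)
    finally have "d powr s * Z \<le> \<eta>" .
    have "hausdorff_pre s \<delta> E \<le> ennreal (d powr s * Z)"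
      unfolding Z_def by (rule hausdorff_pre_real_le[OF assms d])
    also have "\<dots> \<le> ennreal \<eta>"
      using \<open>d powr s * Z \<le> \<eta>\<close> by (rule ennreal_leI)
    finally show ?thesis .
  qed
  have "hausdorff_pre s \<delta> E \<le> 0" if "\<delta> > 0" for \<delta>
  proof (rule ennreal_le_epsilon)
    fix \<eta> :: real
    assume "0 < \<eta>"
    then show "hausdorff_pre s \<delta> E \<le> 0 + ennreal \<eta>"
      using pre_le[OF that] by simp
  qed
  then show ?thesis
    by (simp add: hausdorff_measure_def)
qed

section \<open>Homogeneous Cantor schemes\<close>

locale cantor_scheme =
  fixes T :: "nat \<Rightarrow> 'k set"
    and C :: "nat \<Rightarrow> 'k \<Rightarrow> 'k set"
    and I :: "nat \<Rightarrow> 'k \<Rightarrow> real set"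
    and N :: nat and g Q :: real and \<delta> :: "nat \<Rightarrow> real"
  assumes finite_T: "finite (T n)"
    and card_T: "card (T n) = N ^ n"
    and T_Suc: "T (Suc n) = (\<Union>k\<in>T n. C n k)"
    and card_C_le: "card (C n k) \<le> N"
    and I_Suc_subset: "k \<in> T n \<Longrightarrow> k' \<in> C n k \<Longrightarrow> I (Suc n) k' \<subseteq> I n k"
    and compact_I: "compact (I n k)"
    and I_nonempty: "k \<in> T n \<Longrightarrow> I n k \<noteq> {}"
    and diameter_I_le: "1 \<le> n \<Longrightarrow> k \<in> T n \<Longrightarrow> diameter (I n k) \<le> \<delta> n"
    and \<delta>_tendsto_0: "\<delta> \<longlonglongrightarrow> 0"
    and g_pos: "0 < g"
    and Q_gt_1: "1 < Q"
    and I_separated: "1 \<le> n \<Longrightarrow> k \<in> T n \<Longrightarrow> k' \<in> T n \<Longrightarrow> k \<noteq> k' \<Longrightarrow>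
                        x \<in> I n k \<Longrightarrow> y \<in> I n k' \<Longrightarrow> g / Q ^ n \<le> \<bar>x - y\<bar>"
begin

definition level :: "nat \<Rightarrow> real set" where
  "level n = (\<Union>k\<in>T n. I n k)"

lemma compact_level: "compact (level n)"
  unfolding level_def using finite_T compact_I by (intro compact_UN) auto

lemma level_Suc_subset: "level (Suc n) \<subseteq> level n"
  unfolding level_def T_Suc using I_Suc_subset by blast

lemma level_antimono: "m \<le> n \<Longrightarrow> level n \<subseteq> level m"
  by (induction n rule: dec_induct) (use level_Suc_subset in auto)

text \<open>\<open>N\<^sup>-\<^sup>n hit_count n V\<close> bounds the mass that the uniform measure on the Cantor set
  gives to \<open>V\<close>; \<open>eventually_hit_count_ball_le\<close> is the corresponding Frostman estimate.\<close>

definition hit_count :: "nat \<Rightarrow> real set \<Rightarrow> nat" where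
  "hit_count n V = card {k \<in> T n. I n k \<inter> V \<noteq> {}}"

lemma hit_count_le: "hit_count n V \<le> N ^ n"
  unfolding hit_count_def card_T[symmetric] by (rule card_mono[OF finite_T]) auto

lemma hit_count_Suc_le: "hit_count (Suc n) V \<le> N * hit_count n V"
proof -
  define H where "H = {k \<in> T n. I n k \<inter> V \<noteq> {}}"
  have "{k' \<in> T (Suc n). I (Suc n) k' \<inter> V \<noteq> {}} \<subseteq> (\<Union>k\<in>H. C n k)"
    unfolding H_def T_Suc using I_Suc_subset by blast
  moreover have "finite (\<Union>k\<in>H. C n k)"
    using finite_T[of "Suc n"] by (rule finite_subset[rotated]) (auto simp: T_Suc H_def)
  ultimately have "hit_count (Suc n) V \<le> card (\<Union>k\<in>H. C n k)"
    unfolding hit_count_def by (rule card_mono[rotated])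
  also have "\<dots> \<le> (\<Sum>k\<in>H. card (C n k))"
    by (rule card_UN_le) (simp add: H_def finite_T)
  also have "\<dots> \<le> (\<Sum>k\<in>H. N)"
    by (rule sum_mono) (rule card_C_le)
  finally show ?thesis
    by (simp add: hit_count_def H_def mult.commute)
qed

lemma hit_count_add_le: "hit_count (m + p) V \<le> N ^ p * hit_count m V"
proof (induction p)
  case (Suc p)
  have "hit_count (m + Suc p) V \<le> N * hit_count (m + p) V"
    using hit_count_Suc_le[of "m + p"] by simp
  also have "\<dots> \<le> N * (N ^ p * hit_count m V)"
    using Suc.IH by simp
  finally show ?case
    by (simp add: mult.assoc)
qed simp

lemma hit_count_ball_le:
  assumes "1 \<le> n" "0 \<le> r"
  shows "real (hit_count n (ball z r)) * (g / Q ^ n) \<le> 2 * r + g / Q ^ n"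
proof -
  define H where "H = {k \<in> T n. I n k \<inter> ball z r \<noteq> {}}"
  define p where "p k = (SOME x. x \<in> I n k \<inter> ball z r)" for k
  have p: "p k \<in> I n k \<inter> ball z r" if "k \<in> H" for k
    unfolding p_def by (rule someI_ex) (use that in \<open>auto simp: H_def\<close>)
  have separated: "g / Q ^ n \<le> \<bar>p k - p k'\<bar>" if "k \<in> H" "k' \<in> H" "k \<noteq> k'" for k k'
    using I_separated[OF assms(1) _ _ that(3)] p[OF that(1)] p[OF that(2)] that(1,2)
    by (auto simp: H_def)
  have "inj_on p H"
    using separated g_pos Q_gt_1 by (intro inj_onI) (smt (verit) divide_pos_pos zero_less_power)
  then have "card (p ` H) = hit_count n (ball z r)"
    by (simp add: card_image hit_count_def H_def)
  moreover have "real (card (p ` H)) * (g / Q ^ n) \<le> (z + r) - (z - r) + g / Q ^ n"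
  proof (rule card_separated_le)
    show "finite (p ` H)"
      using finite_T[of n] by (simp add: H_def)
    show "p ` H \<subseteq> {z - r..z + r}"
      using p by (force simp: dist_real_def)
  qed (use separated g_pos Q_gt_1 assms(2) in auto)
  ultimately show ?thesis
    by simp
qed

definition mass_const :: "real \<Rightarrow> real" where
  "mass_const s = 2 * Q * g powr - s + (Q / g) powr s"

lemma mass_const_pos: "0 < mass_const s"
  unfolding mass_const_def using g_pos Q_gt_1 by (intro add_pos_nonneg) auto

lemma scale_between_gaps:
  assumes "0 < D" "D < g / Q"
  obtains n where "1 \<le> n" "g / Q ^ Suc n \<le> D" "D < g / Q ^ n"
proof -
  obtain p where "g / D < Q ^ p"
    using real_arch_pow[OF Q_gt_1] by blast
  then have "g < D * Q ^ p"
    using assms(1) by (simp add: divide_less_eq mult.commute)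
  also have "\<dots> \<le> D * Q ^ Suc p"
    using assms(1) Q_gt_1 by (intro mult_left_mono power_increasing) auto
  finally have "g < D * Q ^ Suc p" .
  then have "g / Q ^ Suc p \<le> D"
    using Q_gt_1 by (simp add: divide_le_eq mult.commute)
  then have ex: "\<exists>p. g / Q ^ Suc p \<le> D" ..
  define n where "n = (LEAST p. g / Q ^ Suc p \<le> D)"
  have n: "g / Q ^ Suc n \<le> D"
    unfolding n_def using LeastI_ex[OF ex] .
  have "n \<noteq> 0"
  proof
    assume "n = 0"
    with n assms(2) show False
      by simp
  qed
  moreover have "D < g / Q ^ n"
  proof -
    obtain n' where n': "n = Suc n'"
      using \<open>n \<noteq> 0\<close> not0_implies_Suc by blast
    then have "\<not> g / Q ^ Suc n' \<le> D"
      using not_less_Least[of n' "\<lambda>p. g / Q ^ Suc p \<le> D"] by (simp add: n_def)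
    then show ?thesis
      using n' by simp
  qed
  ultimately show ?thesis
    using that[of n] n by simp
qed

lemma N_ge_1:
  assumes "0 \<le> s" "Q powr s \<le> N"
  shows "1 \<le> real N"
  using ge_one_powr_ge_zero[of Q s] Q_gt_1 assms by simp

lemma gap_powr_minus: "(g / Q ^ n) powr - s = g powr - s * (Q powr s) ^ n"
proof -
  have "(Q ^ n) powr s = (Q powr s) ^ n"
    using Q_gt_1 by (simp add: powr_realpow[symmetric] powr_powr mult.commute)
  moreover have "(g / Q ^ n) powr s = g powr s / (Q ^ n) powr s"
    using g_pos Q_gt_1 by (simp add: powr_divide)
  ultimately show ?thesis
    by (simp add: powr_minus divide_inverse)
qed

lemma hit_count_ball_at_scale:
  assumes s: "0 < s" "s < 1" and NQ: "Q powr s \<le> N" and "1 \<le> n"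
    and scale: "g / Q ^ Suc n \<le> 2 * r" "2 * r < g / Q ^ n"
  shows "real (hit_count (Suc n) (ball z r)) \<le> mass_const s * (2 * r) powr s * N ^ Suc n"
proof -
  define G where "G = g / Q ^ n"
  define D where "D = 2 * r"
  have G: "0 < G" "g / Q ^ Suc n = G / Q"
    using g_pos Q_gt_1 by (simp_all add: G_def field_simps)
  have D: "G / Q \<le> D" "D < G"
    using scale unfolding D_def G(2)[symmetric] G_def by (simp_all add: mult.commute)
  have "0 < D"
    using D(1) G(1) Q_gt_1 by (smt (verit) divide_pos_pos)
  have "real (hit_count (Suc n) (ball z r)) * (G / Q) \<le> D + G / Q"
    using hit_count_ball_le[of "Suc n" r z] \<open>0 < D\<close> unfolding G(2) D_def by simp
  then have "real (hit_count (Suc n) (ball z r)) \<le> 2 * Q * D / G"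
    using D(1) G(1) Q_gt_1 by (simp add: field_simps)
  also have "\<dots> \<le> 2 * Q * (D powr s * G powr (1 - s)) / G"
  proof -
    have "D = D powr s * D powr (1 - s)"
      using \<open>0 < D\<close> by (simp flip: powr_add)
    also have "\<dots> \<le> D powr s * G powr (1 - s)"
      using s D(2) \<open>0 < D\<close> by (intro mult_left_mono powr_mono2) auto
    finally show ?thesis
      using G(1) Q_gt_1 by (intro divide_right_mono mult_left_mono) auto
  qed
  also have "\<dots> = 2 * Q * g powr - s * D powr s * (Q powr s) ^ n"
  proof -
    have "G powr (1 - s) / G = G powr - s"
      using G(1) by (simp add: powr_diff powr_minus divide_inverse)
    then have "G powr (1 - s) / G = g powr - s * (Q powr s) ^ n"
      by (simp add: G_def gap_powr_minus)
    then show ?thesis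
      using G(1) by (simp add: field_simps)
  qed
  also have "\<dots> \<le> 2 * Q * g powr - s * D powr s * N ^ Suc n"
  proof -
    have "(Q powr s) ^ n \<le> real N ^ n"
      using NQ by (intro power_mono) auto
    also have "\<dots> \<le> real N ^ Suc n"
      using N_ge_1[OF less_imp_le[OF s(1)] NQ] by (intro power_increasing) auto
    finally show ?thesis
      using Q_gt_1 by (intro mult_left_mono) auto
  qed
  also have "\<dots> \<le> mass_const s * D powr s * N ^ Suc n"
    unfolding mass_const_def by (intro mult_right_mono) auto
  finally show ?thesis
    by (simp add: D_def)
qed

lemma eventually_hit_count_ball_le:
  assumes s: "0 < s" "s < 1" and NQ: "Q powr s \<le> N" and "0 < r"
  shows "\<exists>m0. \<forall>m\<ge>m0. real (hit_count m (ball z r)) \<le> mass_const s * (2 * r) powr s * N ^ m"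
proof (cases "2 * r < g / Q")
  case False
  have "1 \<le> (Q / g * (2 * r)) powr s"
    using False g_pos Q_gt_1 s by (intro ge_one_powr_ge_zero) (auto simp: field_simps)
  also have "\<dots> = (Q / g) powr s * (2 * r) powr s"
    by (rule powr_mult)
  also have "\<dots> \<le> mass_const s * (2 * r) powr s"
    unfolding mass_const_def using g_pos Q_gt_1 by (intro mult_right_mono) auto
  finally have "real N ^ m \<le> mass_const s * (2 * r) powr s * N ^ m" for m
    by (simp add: mult_le_cancel_right1)
  moreover have "real (hit_count m (ball z r)) \<le> real N ^ m" for m
    using hit_count_le[of m] by (metis of_nat_le_iff of_nat_power)
  ultimately show ?thesis
    using order_trans by blast
next
  case True
  then obtain n where n: "1 \<le> n" "g / Q ^ Suc n \<le> 2 * r" "2 * r < g / Q ^ n"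
    using scale_between_gaps assms(4) by (metis mult_pos_pos zero_less_numeral)
  have "real (hit_count m (ball z r)) \<le> mass_const s * (2 * r) powr s * N ^ m" if le: "Suc n \<le> m" for m
  proof -
    obtain p where m: "m = Suc n + p"
      using le_Suc_ex[OF le] by blast
    have "real (hit_count m (ball z r)) \<le> real N ^ p * real (hit_count (Suc n) (ball z r))"
      using hit_count_add_le[of "Suc n" p] m by (metis of_nat_le_iff of_nat_mult of_nat_power)
    also have "\<dots> \<le> real N ^ p * (mass_const s * (2 * r) powr s * N ^ Suc n)"
      using hit_count_ball_at_scale[OF s NQ n] by (intro mult_left_mono) auto
    finally show ?thesis
      by (simp add: m power_add mult_ac)
  qed
  then show ?thesis
    by blast
qed

lemma eventually_I_subset_cover:
  assumes "\<And>i. i \<in> J \<Longrightarrow> open (V i)" "(\<Inter>n. level n) \<subseteq> (\<Union>i\<in>J. V i)"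
  obtains F m0 where "F \<subseteq> J" "finite F" "\<And>m k. m0 \<le> m \<Longrightarrow> k \<in> T m \<Longrightarrow> \<exists>i\<in>F. I m k \<subseteq> V i"
proof -
  obtain P where P: "level P \<subseteq> (\<Union>i\<in>J. V i)"
    using compact_decreasing_subset_open[OF compact_level level_antimono _ assms(2)] assms(1)
    by blast
  obtain F where F: "F \<subseteq> J" "finite F" "level P \<subseteq> (\<Union>i\<in>F. V i)"
    using compactE_image[OF compact_level, of J V] P assms(1) by metis
  obtain e where e: "0 < e" "\<And>x. x \<in> level P \<Longrightarrow> \<exists>W\<in>V ` F. ball x e \<subseteq> W"
    using Heine_Borel_lemma[OF compact_level F(3)] F(1) assms(1) by blast
  obtain m1 where m1: "\<And>m. m1 \<le> m \<Longrightarrow> \<delta> m < e"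
    using \<delta>_tendsto_0 e(1) by (metis LIMSEQ_iff abs_less_iff diff_zero real_norm_def)
  have "\<exists>i\<in>F. I m k \<subseteq> V i" if m: "max P (max 1 m1) \<le> m" and k: "k \<in> T m" for m k
  proof -
    obtain x where x: "x \<in> I m k"
      using I_nonempty[OF k] by blast
    have "x \<in> level P"
      using level_antimono[of P m] m x k by (auto simp: level_def)
    then obtain i where i: "i \<in> F" "ball x e \<subseteq> V i"
      using e(2) by blast
    have "I m k \<subseteq> ball x e"
    proof
      fix y
      assume "y \<in> I m k"
      then have "dist x y \<le> diameter (I m k)"
        using x compact_I by (intro diameter_bounded_bound) (auto intro: compact_imp_bounded)
      also have "\<dots> < e"
        using diameter_I_le[OF _ k] m1[of m] m by simp
      finally show "y \<in> ball x e"
        by simp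
    qed
    then show ?thesis
      using i by blast
  qed
  then show ?thesis
    using that F(1,2) by blast
qed

lemma N_pow_le_sum_hit_count:
  assumes "finite F" "\<And>k. k \<in> T m \<Longrightarrow> \<exists>i\<in>F. I m k \<inter> V i \<noteq> {}"
  shows "N ^ m \<le> (\<Sum>i\<in>F. hit_count m (V i))"
proof -
  have "T m \<subseteq> (\<Union>i\<in>F. {k \<in> T m. I m k \<inter> V i \<noteq> {}})"
    using assms(2) by blast
  then have "card (T m) \<le> card (\<Union>i\<in>F. {k \<in> T m. I m k \<inter> V i \<noteq> {}})"
    by (rule card_mono[rotated]) (use assms(1) finite_T in auto)
  also have "\<dots> \<le> (\<Sum>i\<in>F. hit_count m (V i))"
    unfolding hit_count_def using assms(1) by (rule card_UN_le)
  finally show ?thesis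
    by (simp add: card_T)
qed

lemma ball_cover_mass_ge:
  assumes s: "0 < s" "s < 1" and NQ: "Q powr s \<le> N"
    and r: "\<And>i. i \<in> J \<Longrightarrow> 0 < r i"
    and cover: "(\<Inter>n. level n) \<subseteq> (\<Union>i\<in>J. ball (z i) (r i))"
  obtains F where "F \<subseteq> J" "finite F" "1 \<le> mass_const s * (\<Sum>i\<in>F. (2 * r i) powr s)"
proof -
  obtain F m0 where F: "F \<subseteq> J" "finite F"
    and fine: "\<And>m k. m0 \<le> m \<Longrightarrow> k \<in> T m \<Longrightarrow> \<exists>i\<in>F. I m k \<subseteq> ball (z i) (r i)"
    by (rule eventually_I_subset_cover[OF open_ball cover]) blast
  have "\<exists>m1. \<forall>m\<ge>m1.
          real (hit_count m (ball (z i) (r i))) \<le> mass_const s * (2 * r i) powr s * N ^ m"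
    if "i \<in> F" for i
    using F(1) that by (intro eventually_hit_count_ball_le[OF s NQ r]) auto
  then have "\<exists>m1. \<forall>i\<in>F. \<forall>m\<ge>m1 i.
          real (hit_count m (ball (z i) (r i))) \<le> mass_const s * (2 * r i) powr s * N ^ m"
    by (intro bchoice) blast
  then obtain m1 where m1: "\<forall>i\<in>F. \<forall>m\<ge>m1 i.
          real (hit_count m (ball (z i) (r i))) \<le> mass_const s * (2 * r i) powr s * N ^ m" ..
  define m where "m = m0 + (\<Sum>i\<in>F. m1 i)"
  have m1_le: "m1 i \<le> m" if "i \<in> F" for i
    using member_le_sum[OF that, of m1] F(2) by (simp add: m_def)
  have "m0 \<le> m"
    by (simp add: m_def)
  then have "\<exists>i\<in>F. I m k \<inter> ball (z i) (r i) \<noteq> {}" if "k \<in> T m" for k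
    using fine[OF _ that] I_nonempty[OF that] by blast
  then have "N ^ m \<le> (\<Sum>i\<in>F. hit_count m (ball (z i) (r i)))"
    by (rule N_pow_le_sum_hit_count[OF F(2)])
  then have "real N ^ m \<le> (\<Sum>i\<in>F. real (hit_count m (ball (z i) (r i))))"
    using of_nat_le_iff by (metis of_nat_power of_nat_sum)
  also have "\<dots> \<le> (\<Sum>i\<in>F. mass_const s * (2 * r i) powr s * N ^ m)"
    using m1 m1_le by (intro sum_mono) auto
  also have "\<dots> = mass_const s * (\<Sum>i\<in>F. (2 * r i) powr s) * N ^ m"
    by (simp add: sum_distrib_left sum_distrib_right mult_ac)
  finally have "1 \<le> mass_const s * (\<Sum>i\<in>F. (2 * r i) powr s)"
    using N_ge_1[OF less_imp_le[OF s(1)] NQ] by (simp add: mult_le_cancel_right1)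
  then show ?thesis
    using that F by blast
qed

lemma bounded_cover_mass_ge:
  fixes U :: "nat \<Rightarrow> real set"
  assumes s: "0 < s" "s < 1" and NQ: "Q powr s \<le> N" and "0 < \<eta>"
    and cover: "(\<Inter>n. level n) \<subseteq> (\<Union>i. U i)" and bounded: "\<And>i. bounded (U i)"
  obtains F where "finite F" "1 \<le> mass_const s * (2 * (\<Sum>i\<in>F. diameter (U i) powr s) + 2 * \<eta>)"
proof -
  define J where "J = {i. U i \<noteq> {}}"
  define z where "z i = (SOME x. x \<in> U i)" for i
  define e where "e i = (\<eta> / 2 ^ Suc i) powr (1 / s)" for i
  define r where "r i = diameter (U i) + e i" for i
  have "0 < e i" for i
    using \<open>0 < \<eta>\<close> by (simp add: e_def)
  have r: "0 < r i" for i
    using diameter_ge_0[OF bounded] \<open>0 < e i\<close> by (simp add: r_def add_nonneg_pos)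
  have U_subset: "U i \<subseteq> ball (z i) (r i)" if "i \<in> J" for i
  proof -
    have "z i \<in> U i"
      using that some_in_eq[of "U i"] by (simp add: J_def z_def)
    then show ?thesis
      using bounded_subset_ball_diameter[OF bounded _ \<open>0 < e i\<close>] by (simp add: r_def)
  qed
  have "(\<Inter>n. level n) \<subseteq> (\<Union>i\<in>J. ball (z i) (r i))"
  proof
    fix x
    assume "x \<in> (\<Inter>n. level n)"
    then obtain i where "x \<in> U i"
      using cover by blast
    then have "i \<in> J"
      by (auto simp: J_def)
    then show "x \<in> (\<Union>i\<in>J. ball (z i) (r i))"
      using \<open>x \<in> U i\<close> U_subset by blast
  qed
  then obtain F where F: "F \<subseteq> J" "finite F" "1 \<le> mass_const s * (\<Sum>i\<in>F. (2 * r i) powr s)"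
    by (rule ball_cover_mass_ge[OF s NQ r])
  note F(3)
  also have "mass_const s * (\<Sum>i\<in>F. (2 * r i) powr s)
               \<le> mass_const s * (2 * (\<Sum>i\<in>F. diameter (U i) powr s) + 2 * \<eta>)"
    unfolding r_def e_def using F(2) s \<open>0 < \<eta>\<close> diameter_ge_0[OF bounded]
      less_imp_le[OF mass_const_pos[of s]]
    by (intro mult_left_mono sum_powr_enlarged_le) auto
  finally show ?thesis
    using that F(2) by blast
qed

lemma cover_sum_diameter_powr_ge:
  assumes s: "0 < s" "s < 1" and NQ: "Q powr s \<le> N"
    and cover: "(\<Inter>n. level n) \<subseteq> (\<Union>i. U i)" and bounded: "\<And>i. bounded (U i)"
  shows "ennreal (1 / (2 * mass_const s)) \<le> (\<Sum>i. ennreal (diameter (U i) powr s))"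
proof (rule ennreal_le_epsilon)
  fix \<eta> :: real
  assume "0 < \<eta>"
  obtain F where F: "finite F" "1 \<le> mass_const s * (2 * (\<Sum>i\<in>F. diameter (U i) powr s) + 2 * \<eta>)"
    by (rule bounded_cover_mass_ge[OF s NQ \<open>0 < \<eta>\<close> cover bounded])
  then have "1 / (2 * mass_const s) \<le> (\<Sum>i\<in>F. diameter (U i) powr s) + \<eta>"
    using mass_const_pos[of s] by (simp add: field_simps)
  then have "ennreal (1 / (2 * mass_const s)) \<le> ennreal ((\<Sum>i\<in>F. diameter (U i) powr s) + \<eta>)"
    by (rule ennreal_leI)
  also have "\<dots> = (\<Sum>i\<in>F. ennreal (diameter (U i) powr s)) + ennreal \<eta>"
    using \<open>0 < \<eta>\<close> by (simp add: sum_nonneg)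
  also have "\<dots> \<le> (\<Sum>i. ennreal (diameter (U i) powr s)) + ennreal \<eta>"
    using F(1) by (intro add_right_mono sum_le_suminf) auto
  finally show "ennreal (1 / (2 * mass_const s)) \<le> (\<Sum>i. ennreal (diameter (U i) powr s)) + ennreal \<eta>" .
qed

end


section \<open>A Cantor scheme of prescribed fractional parts of \<open>\<xi> \<alpha>\<^sup>n\<close>\<close>

locale frac_power_scheme =
  fixes \<xi> \<epsilon> :: real and a :: "nat \<Rightarrow> real" and M :: real and N :: nat
  assumes \<xi>_pos: "0 < \<xi>" and \<epsilon>_pos: "0 < \<epsilon>" and \<epsilon>_less_1: "\<epsilon> < 1"
    and a_bounds: "\<And>n. 1 \<le> n \<Longrightarrow> 0 \<le> a n \<and> a n < 1 - \<epsilon>"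
    and M_ge_1: "1 \<le> M"
    and N_le_\<xi>M: "real N + 1 \<le> \<xi> * M"
    and N_le_M\<epsilon>: "real N + 1 \<le> M * \<epsilon>"
begin

text \<open>For \<open>n \<ge> 1\<close>, \<open>I n k = [lo n k, hi n k]\<close> is the set of \<open>\<alpha> \<ge> 0\<close> with
  \<open>k + a n \<le> \<xi> \<alpha>\<^sup>n \<le> k + a n + \<epsilon>\<close>; the root interval \<open>I 0 0\<close> is \<open>[M, 2M]\<close>.\<close>

definition lo :: "nat \<Rightarrow> int \<Rightarrow> real" where
  "lo n k = (if n = 0 then M else root n ((k + a n) / \<xi>))"

definition hi :: "nat \<Rightarrow> int \<Rightarrow> real" where
  "hi n k = (if n = 0 then 2 * M else root n ((k + a n + \<epsilon>) / \<xi>))"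

lemma lo_Suc: "lo (Suc n) k = root (Suc n) ((k + a (Suc n)) / \<xi>)"
  by (simp add: lo_def)

lemma hi_Suc: "hi (Suc n) k = root (Suc n) ((k + a (Suc n) + \<epsilon>) / \<xi>)"
  by (simp add: hi_def)

definition I :: "nat \<Rightarrow> int \<Rightarrow> real set" where
  "I n k = {lo n k .. hi n k}"

definition first_child :: "nat \<Rightarrow> int \<Rightarrow> int" where
  "first_child n k = \<lceil>\<xi> * lo n k ^ Suc n - a (Suc n)\<rceil>"

definition children :: "nat \<Rightarrow> int \<Rightarrow> int set" where
  "children n k = (\<lambda>j. first_child n k + int j) ` {..<N}"

primrec T :: "nat \<Rightarrow> int set" where
  "T 0 = {0}"
| "T (Suc n) = (\<Union>k\<in>T n. children n k)"

definition admissible :: "nat \<Rightarrow> int \<Rightarrow> bool" where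
  "admissible n k \<longleftrightarrow> M \<le> lo n k \<and> lo n k \<le> hi n k \<and> hi n k \<le> 2 * M \<and>
     real N + 1 \<le> \<xi> * hi n k ^ Suc n - \<xi> * lo n k ^ Suc n \<and>
     (1 \<le> n \<longrightarrow> \<xi> * lo n k ^ n = k + a n \<and> \<xi> * hi n k ^ n = k + a n + \<epsilon>)"

lemma pow_root_div_\<xi>:
  assumes "0 \<le> u"
  shows "\<xi> * root (Suc n) (u / \<xi>) ^ Suc n = u"
  using real_root_pow_pos2[of "Suc n" "u / \<xi>"] assms \<xi>_pos by (simp del: power_Suc)

lemma le_root_div_\<xi>:
  assumes "0 \<le> x" "\<xi> * x ^ Suc n \<le> u"
  shows "x \<le> root (Suc n) (u / \<xi>)"
proof -
  have "x = root (Suc n) (x ^ Suc n)"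
    using assms(1) real_root_power_cancel[of "Suc n" x] by (simp del: power_Suc)
  also have "\<dots> \<le> root (Suc n) (u / \<xi>)"
    using assms(2) \<xi>_pos by (intro real_root_le_mono) (auto simp: field_simps)
  finally show ?thesis .
qed

lemma root_div_\<xi>_le:
  assumes "0 \<le> x" "u \<le> \<xi> * x ^ Suc n"
  shows "root (Suc n) (u / \<xi>) \<le> x"
proof -
  have "root (Suc n) (u / \<xi>) \<le> root (Suc n) (x ^ Suc n)"
    using assms(2) \<xi>_pos by (intro real_root_le_mono) (auto simp: field_simps)
  also have "\<dots> = x"
    using assms(1) real_root_power_cancel[of "Suc n" x] by (simp del: power_Suc)
  finally show ?thesis .
qed

lemma child_window:
  assumes "admissible n k" "k' \<in> children n k"
  shows "\<xi> * lo n k ^ Suc n \<le> k' + a (Suc n)" "k' + a (Suc n) + \<epsilon> \<le> \<xi> * hi n k ^ Suc n"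
proof -
  obtain j where j: "j < N" "k' = first_child n k + int j"
    using assms(2) by (auto simp: children_def)
  have "\<xi> * lo n k ^ Suc n - a (Suc n) \<le> first_child n k"
    "first_child n k < \<xi> * lo n k ^ Suc n - a (Suc n) + 1"
    unfolding first_child_def by linarith+
  moreover have "real N + 1 \<le> \<xi> * hi n k ^ Suc n - \<xi> * lo n k ^ Suc n"
    using assms(1) by (simp add: admissible_def)
  ultimately show "\<xi> * lo n k ^ Suc n \<le> k' + a (Suc n)" "k' + a (Suc n) + \<epsilon> \<le> \<xi> * hi n k ^ Suc n"
    using j \<epsilon>_less_1 a_bounds[of "Suc n"] by auto
qed

lemma child_endpoints:
  assumes "admissible n k" "k' \<in> children n k"
  shows "lo n k \<le> lo (Suc n) k'" "lo (Suc n) k' \<le> hi (Suc n) k'" "hi (Suc n) k' \<le> hi n k"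
    and "\<xi> * lo (Suc n) k' ^ Suc n = k' + a (Suc n)"
    and "\<xi> * hi (Suc n) k' ^ Suc n = k' + a (Suc n) + \<epsilon>"
proof -
  have lo: "1 \<le> lo n k"
    using assms(1) M_ge_1 by (simp add: admissible_def)
  note window = child_window[OF assms]
  have "0 \<le> k' + a (Suc n)"
    using window(1) lo \<xi>_pos by (smt (verit) mult_pos_pos zero_less_power)
  then show "\<xi> * lo (Suc n) k' ^ Suc n = k' + a (Suc n)"
    "\<xi> * hi (Suc n) k' ^ Suc n = k' + a (Suc n) + \<epsilon>"
    using pow_root_div_\<xi> \<epsilon>_pos by (simp_all add: lo_Suc hi_Suc del: power_Suc)
  show "lo n k \<le> lo (Suc n) k'"
    unfolding lo_Suc using lo window(1) by (intro le_root_div_\<xi>) auto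
  show "hi (Suc n) k' \<le> hi n k"
    unfolding hi_Suc using lo window(2) assms(1)
    by (intro root_div_\<xi>_le) (auto simp: admissible_def)
  show "lo (Suc n) k' \<le> hi (Suc n) k'"
    unfolding lo_Suc hi_Suc using \<epsilon>_pos \<xi>_pos by (auto intro!: real_root_le_mono divide_right_mono)
qed

lemma admissible_child:
  assumes "admissible n k" "k' \<in> children n k"
  shows "admissible (Suc n) k'"
proof -
  define l h where "l = lo (Suc n) k'" and "h = hi (Suc n) k'"
  note e = child_endpoints[OF assms, folded l_def h_def]
  have "M \<le> l" "h \<le> 2 * M"
    using e(1,3) assms(1) by (auto simp: admissible_def)
  have "\<xi> * h ^ Suc (Suc n) - \<xi> * l ^ Suc (Suc n) = h * (\<xi> * h ^ Suc n) - l * (\<xi> * l ^ Suc n)"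
    by (simp add: mult_ac)
  also have "\<dots> = (h - l) * (k' + a (Suc n) + \<epsilon>) + l * \<epsilon>"
    unfolding e(4,5) by (simp add: algebra_simps)
  also have "\<dots> \<ge> M * \<epsilon>"
  proof -
    have "0 \<le> k' + a (Suc n) + \<epsilon>"
      using e(4) \<xi>_pos \<open>M \<le> l\<close> M_ge_1 \<epsilon>_pos by (smt (verit) mult_pos_pos zero_less_power)
    then show ?thesis
      using e(2) \<open>M \<le> l\<close> \<epsilon>_pos by (smt (verit) mult_nonneg_nonneg mult_right_mono)
  qed
  finally show ?thesis
    using e \<open>M \<le> l\<close> \<open>h \<le> 2 * M\<close> N_le_M\<epsilon> by (simp add: admissible_def l_def h_def del: power_Suc)
qed

lemma admissible_T: "k \<in> T n \<Longrightarrow> admissible n k"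
proof (induction n arbitrary: k)
  case 0
  then show ?case
    using M_ge_1 N_le_\<xi>M by (simp add: admissible_def lo_def hi_def algebra_simps)
next
  case (Suc n)
  then show ?case
    using admissible_child by auto
qed

lemma power_window:
  assumes "1 \<le> n" "k \<in> T n" "\<alpha> \<in> I n k"
  shows "k + a n \<le> \<xi> * \<alpha> ^ n" "\<xi> * \<alpha> ^ n \<le> k + a n + \<epsilon>" "M \<le> \<alpha>" "\<alpha> \<le> 2 * M"
proof -
  have adm: "M \<le> lo n k" "hi n k \<le> 2 * M" "\<xi> * lo n k ^ n = k + a n" "\<xi> * hi n k ^ n = k + a n + \<epsilon>"
    using admissible_T[OF assms(2)] assms(1) by (auto simp: admissible_def)
  have \<alpha>: "lo n k \<le> \<alpha>" "\<alpha> \<le> hi n k"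
    using assms(3) by (auto simp: I_def)
  show "M \<le> \<alpha>" "\<alpha> \<le> 2 * M"
    using adm \<alpha> by auto
  have "\<xi> * lo n k ^ n \<le> \<xi> * \<alpha> ^ n" "\<xi> * \<alpha> ^ n \<le> \<xi> * hi n k ^ n"
    using adm(1,2) \<alpha> M_ge_1 \<xi>_pos by (auto intro!: mult_left_mono power_mono)
  then show "k + a n \<le> \<xi> * \<alpha> ^ n" "\<xi> * \<alpha> ^ n \<le> k + a n + \<epsilon>"
    using adm(3,4) by linarith+
qed

lemma frac_window:
  assumes "1 \<le> n" "k \<in> T n" "\<alpha> \<in> I n k"
  shows "a n \<le> frac (\<xi> * \<alpha> ^ n) \<and> frac (\<xi> * \<alpha> ^ n) \<le> a n + \<epsilon>"
proof -
  note w = power_window[OF assms]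
  have "\<lfloor>\<xi> * \<alpha> ^ n\<rfloor> = k"
    unfolding floor_eq_iff using w a_bounds[OF assms(1)] by linarith
  then show ?thesis
    using w by (simp add: frac_def)
qed

lemma I_gap:
  assumes "1 \<le> n" "k \<in> T n" "k' \<in> T n" "k < k'" "\<alpha> \<in> I n k" "\<beta> \<in> I n k'"
  shows "(1 - \<epsilon>) / \<xi> / (4 * M) ^ n \<le> \<beta> - \<alpha>"
proof -
  note w = power_window[OF assms(1,2,5)] and w' = power_window[OF assms(1,3,6)]
  have "real_of_int k + 1 \<le> k'"
    using assms(4) by linarith
  then have gap: "1 - \<epsilon> \<le> \<xi> * \<beta> ^ n - \<xi> * \<alpha> ^ n"
    using w w' by linarith
  obtain m where n: "n = Suc m"
    using assms(1) by (cases n) auto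
  have "\<alpha> \<le> \<beta>"
  proof (rule ccontr)
    assume "\<not> \<alpha> \<le> \<beta>"
    then have "\<xi> * \<beta> ^ n \<le> \<xi> * \<alpha> ^ n"
      using w' M_ge_1 \<xi>_pos by (intro mult_left_mono power_mono) auto
    then show False
      using gap \<epsilon>_less_1 by linarith
  qed
  have "\<beta> ^ n - \<alpha> ^ n \<le> Suc m * \<beta> ^ m * (\<beta> - \<alpha>)"
    unfolding n using \<open>\<alpha> \<le> \<beta>\<close> w M_ge_1 by (intro power_Suc_diff_le) auto
  also have "\<dots> \<le> Suc m * (2 * M) ^ m * (\<beta> - \<alpha>)"
    using \<open>\<alpha> \<le> \<beta>\<close> w' M_ge_1 by (intro mult_right_mono mult_left_mono power_mono) auto
  also have "\<dots> \<le> (4 * M) ^ n * (\<beta> - \<alpha>)"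
    using Suc_mult_power_le[OF M_ge_1, of m] \<open>\<alpha> \<le> \<beta>\<close> unfolding n by (intro mult_right_mono) auto
  finally have "1 - \<epsilon> \<le> \<xi> * (4 * M) ^ n * (\<beta> - \<alpha>)"
    using gap \<xi>_pos by (smt (verit) mult_left_mono right_diff_distrib mult.assoc)
  then show ?thesis
    using \<xi>_pos M_ge_1 by (simp add: field_simps)
qed

lemma diameter_I_bound:
  assumes "1 \<le> n" "k \<in> T n"
  shows "diameter (I n k) \<le> \<epsilon> / (\<xi> * n)"
proof -
  have adm: "M \<le> lo n k" "lo n k \<le> hi n k"
    "\<xi> * lo n k ^ n = k + a n" "\<xi> * hi n k ^ n = k + a n + \<epsilon>"
    using admissible_T[OF assms(2)] assms(1) by (auto simp: admissible_def)
  obtain m where n: "n = Suc m"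
    using assms(1) by (cases n) auto
  have "1 \<le> lo n k ^ m"
    using adm M_ge_1 by (intro one_le_power) auto
  then have "real n \<le> real n * lo n k ^ m"
    by (simp add: mult_le_cancel_left1)
  then have "real n * (hi n k - lo n k) \<le> real n * lo n k ^ m * (hi n k - lo n k)"
    using adm by (intro mult_right_mono) auto
  also have "\<dots> \<le> hi n k ^ n - lo n k ^ n"
    using adm M_ge_1 unfolding n by (intro power_Suc_diff_ge) auto
  finally have "\<xi> * (real n * (hi n k - lo n k)) \<le> \<epsilon>"
    using adm \<xi>_pos by (smt (verit) mult_left_mono right_diff_distrib)
  then show ?thesis
    using adm \<xi>_pos assms(1) by (simp add: I_def field_simps)
qed

lemma I_Suc_subset: "k \<in> T n \<Longrightarrow> k' \<in> children n k \<Longrightarrow> I (Suc n) k' \<subseteq> I n k"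
  using child_endpoints[OF admissible_T] by (auto simp: I_def)

lemma lo_in_I: "k \<in> T n \<Longrightarrow> lo n k \<in> I n k"
  using admissible_T by (auto simp: admissible_def I_def)

lemma I_separated:
  assumes "1 \<le> n" "k \<in> T n" "k' \<in> T n" "k \<noteq> k'" "x \<in> I n k" "y \<in> I n k'"
  shows "(1 - \<epsilon>) / \<xi> / (4 * M) ^ n \<le> \<bar>x - y\<bar>"
proof (cases "k < k'")
  case True
  then show ?thesis
    using I_gap[OF assms(1-3) _ assms(5,6)] by simp
next
  case False
  then have "k' < k"
    using assms(4) by simp
  then show ?thesis
    using I_gap[OF assms(1,3,2) _ assms(6,5)] by simp
qed

lemma I_disjoint:
  assumes "k \<in> T n" "k' \<in> T n" "k \<noteq> k'"
  shows "I n k \<inter> I n k' = {}"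
proof (cases "n = 0")
  case False
  have "0 < (1 - \<epsilon>) / \<xi> / (4 * M) ^ n"
    using \<epsilon>_less_1 \<xi>_pos M_ge_1 by simp
  then show ?thesis
    using I_separated[OF _ assms] False by fastforce
qed (use assms in simp)

lemma children_disjoint:
  assumes "k \<in> T n" "k' \<in> T n" "k \<noteq> k'"
  shows "children n k \<inter> children n k' = {}"
proof (rule ccontr)
  assume "children n k \<inter> children n k' \<noteq> {}"
  then obtain c where c: "c \<in> children n k" "c \<in> children n k'"
    by blast
  then have "c \<in> T (Suc n)"
    using assms by auto
  then have "lo (Suc n) c \<in> I n k \<inter> I n k'"
    using lo_in_I I_Suc_subset assms(1,2) c by blast
  then show False
    using I_disjoint[OF assms] by blast
qed

lemma finite_T: "finite (T n)"
  by (induction n) (auto simp: children_def)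

lemma card_T: "card (T n) = N ^ n"
proof (induction n)
  case (Suc n)
  have "card (T (Suc n)) = (\<Sum>k\<in>T n. card (children n k))"
    unfolding T.simps using finite_T children_disjoint
    by (intro card_UN_disjoint) (auto simp: children_def)
  also have "\<dots> = (\<Sum>k\<in>T n. N)"
    by (intro sum.cong) (auto simp: children_def card_image inj_on_def)
  finally show ?case
    using Suc.IH by simp
qed simp

sublocale cantor_scheme T children I N "(1 - \<epsilon>) / \<xi>" "4 * M" "\<lambda>n. \<epsilon> / (\<xi> * n)"
proof
  show "card (children n k) \<le> N" for n k
    using card_image_le[of "{..<N}" "\<lambda>j. first_child n k + int j"] by (simp add: children_def)
  show "compact (I n k)" for n k
    by (simp add: I_def)
  show "I n k \<noteq> {}" if "k \<in> T n" for n k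
    using lo_in_I[OF that] by blast
  show "(\<lambda>n. \<epsilon> / (\<xi> * real n)) \<longlonglongrightarrow> 0"
    by (intro tendsto_divide_0[OF tendsto_const] filterlim_at_top_imp_at_infinity
        filterlim_tendsto_pos_mult_at_top[OF tendsto_const \<xi>_pos filterlim_real_sequentially])
  show "0 < (1 - \<epsilon>) / \<xi>" "1 < 4 * M"
    using \<epsilon>_less_1 \<xi>_pos M_ge_1 by auto
qed (use finite_T card_T I_Suc_subset diameter_I_bound I_separated in auto)

lemma Inter_level_subset:
  "(\<Inter>n. level n) \<subseteq> {\<alpha>. \<forall>n\<ge>1. a n \<le> frac (\<xi> * \<alpha> ^ n) \<and> frac (\<xi> * \<alpha> ^ n) \<le> a n + \<epsilon>}"
  using frac_window by (fastforce simp: level_def)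

end


text \<open>With \<open>\<mu> = min \<xi> \<epsilon>\<close> and \<open>N \<approx> \<mu> M\<close>, the condition \<open>(4M)\<^sup>s \<le> N\<close> follows from
  \<open>(4M)\<^sup>s = 4M / (4M)\<^sup>1\<^sup>-\<^sup>s \<le> \<mu> M / 2\<close>, i.e. from \<open>(4M)\<^sup>1\<^sup>-\<^sup>s \<ge> 8 / \<mu>\<close>.\<close>

lemma frac_power_parameters:
  fixes \<xi> \<epsilon> s :: real
  assumes "0 < \<xi>" "0 < \<epsilon>" "0 < s" "s < 1"
  obtains M :: real and N :: nat
  where "1 \<le> M" "real N + 1 \<le> \<xi> * M" "real N + 1 \<le> M * \<epsilon>" "(4 * M) powr s \<le> N"
proof -
  define \<mu> where "\<mu> = min \<xi> \<epsilon>"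
  have \<mu>: "0 < \<mu>" "\<mu> \<le> \<xi>" "\<mu> \<le> \<epsilon>"
    using assms by (auto simp: \<mu>_def)
  define M where "M = max (6 / \<mu>) (max 1 ((8 / \<mu>) powr (1 / (1 - s)) / 4))"
  have "6 / \<mu> \<le> M"
    by (simp add: M_def)
  then have "6 \<le> \<mu> * M"
    using \<mu>(1) by (simp add: field_simps)
  moreover have "1 \<le> M" "(8 / \<mu>) powr (1 / (1 - s)) \<le> 4 * M"
    by (simp_all add: M_def)
  ultimately have M: "1 \<le> M" "6 \<le> \<mu> * M" "(8 / \<mu>) powr (1 / (1 - s)) \<le> 4 * M"
    by simp_all
  define N where "N = nat (\<lfloor>\<mu> * M\<rfloor> - 1)"
  have "6 \<le> \<lfloor>\<mu> * M\<rfloor>"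
    using M(2) by (simp add: le_floor_iff)
  then have "real N = of_int \<lfloor>\<mu> * M\<rfloor> - 1"
    by (simp add: N_def)
  then have N: "real N + 1 \<le> \<mu> * M" "\<mu> * M - 2 \<le> real N"
    by linarith+
  have "8 / \<mu> = ((8 / \<mu>) powr (1 / (1 - s))) powr (1 - s)"
    using \<mu>(1) assms(4) by (simp add: powr_powr)
  also have "\<dots> \<le> (4 * M) powr (1 - s)"
    using M(3) assms(4) by (intro powr_mono2) auto
  finally have "8 / \<mu> \<le> (4 * M) powr (1 - s)" .
  then have "(4 * M) powr s \<le> (4 * M) / (8 / \<mu>)"
    using M(1) \<mu>(1) by (simp add: powr_diff field_simps)
  also have "\<dots> \<le> real N"
    using N(2) M(2) \<mu>(1) by (simp add: field_simps)
  finally have "(4 * M) powr s \<le> real N" .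
  moreover have "\<mu> * M \<le> \<xi> * M" "\<mu> * M \<le> M * \<epsilon>"
    using \<mu> M(1) by (simp_all add: mult_right_mono mult.commute)
  ultimately show ?thesis
    using that[OF M(1), of N] N(1) by linarith
qed

lemma hausdorff_measure_frac_power_set_pos:
  fixes \<xi> \<epsilon> t :: real and a :: "nat \<Rightarrow> real"
  assumes "0 < \<xi>" "0 < \<epsilon>" "\<epsilon> < 1" "\<And>n. 1 \<le> n \<Longrightarrow> 0 \<le> a n \<and> a n < 1 - \<epsilon>"
    and "0 \<le> t" "t < 1"
  shows "hausdorff_measure t {\<alpha>::real. \<forall>n\<ge>1. a n \<le> frac (\<xi> * \<alpha> ^ n) \<and>
                                        frac (\<xi> * \<alpha> ^ n) \<le> a n + \<epsilon>} \<noteq> 0"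
proof -
  define E where "E = {\<alpha>::real. \<forall>n\<ge>1. a n \<le> frac (\<xi> * \<alpha> ^ n) \<and> frac (\<xi> * \<alpha> ^ n) \<le> a n + \<epsilon>}"
  define s where "s = (1 + t) / 2"
  have s: "0 < s" "s < 1" "t \<le> s"
    using assms(5,6) by (auto simp: s_def)
  obtain M N where MN: "1 \<le> M" "real N + 1 \<le> \<xi> * M" "real N + 1 \<le> M * \<epsilon>" "(4 * M) powr s \<le> N"
    by (rule frac_power_parameters[OF assms(1,2) s(1,2)])
  interpret frac_power_scheme \<xi> \<epsilon> a M N
    using assms(1-4) MN(1-3) by unfold_locales auto
  have "ennreal (1 / (2 * mass_const s)) \<le> hausdorff_measure t E"
  proof (rule hausdorff_measure_ge_of_cover_bound[OF _ s(3)])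
    fix U :: "nat \<Rightarrow> real set"
    assume cover: "E \<subseteq> (\<Union>i. U i)" and bounded: "\<And>i. bounded (U i)"
    have "(\<Inter>n. level n) \<subseteq> (\<Union>i. U i)"
      using Inter_level_subset cover by (simp add: E_def)
    then show "ennreal (1 / (2 * mass_const s)) \<le> (\<Sum>i. ennreal (diameter (U i) powr s))"
      by (rule cover_sum_diameter_powr_ge[OF s(1,2) MN(4) _ bounded])
  qed
  moreover have "0 < ennreal (1 / (2 * mass_const s))"
    using mass_const_pos[of s] by simp
  ultimately have "0 < hausdorff_measure t E"
    by (rule order.strict_trans2[rotated])
  then show ?thesis
    by (simp add: E_def)
qed

theorem theorem3:
  fixes \<xi> \<epsilon> :: real and a :: "nat \<Rightarrow> real"
  assumes "\<xi> > 0" and "0 < \<epsilon>" and "\<epsilon> < 1"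
    and "\<And>n. n \<ge> 1 \<Longrightarrow> 0 \<le> a n \<and> a n < 1 - \<epsilon>"
  shows "hausdorff_dim {\<alpha>::real. \<forall>n\<ge>1. a n \<le> frac (\<xi> * \<alpha> ^ n) \<and>
                                      frac (\<xi> * \<alpha> ^ n) \<le> a n + \<epsilon>} = 1"
proof (rule hausdorff_dim_eqI)
  show "(0::real) \<le> 1"
    by simp
  show "hausdorff_measure s {\<alpha>::real. \<forall>n\<ge>1. a n \<le> frac (\<xi> * \<alpha> ^ n) \<and>
                                       frac (\<xi> * \<alpha> ^ n) \<le> a n + \<epsilon>} = 0" if "1 < s" for s
    using that by (rule hausdorff_measure_real_eq_0)
  show "hausdorff_measure t {\<alpha>::real. \<forall>n\<ge>1. a n \<le> frac (\<xi> * \<alpha> ^ n) \<and>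
                                       frac (\<xi> * \<alpha> ^ n) \<le> a n + \<epsilon>} \<noteq> 0" if "0 \<le> t" "t < 1" for t
    using hausdorff_measure_frac_power_set_pos[OF assms that] by simp
qed

end
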